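(* Let $\mathcal{L}_{\rm F}$ be the Fibonacci language and let ${\rm S}:\mathcal{L}_{\rm F}\to\mathbb{N}$ be a homomorphism. Let $\mathcal{E}=\{(1,1),(1,2),(1,3),(2,1)\}$. If $({\rm S}(0),{\rm S}(1))\in\mathcal{E}$ then $\mathbb{N}\setminus{\rm S}(\mathcal{L}_{\rm F})$ is empty; otherwise $\mathbb{N}\setminus{\rm S}(\mathcal{L}_{\rm F})$ is infinite.
   Context: $\mathbb{N}=\{1,2,3,\dots\}$ and $[x]$ denotes the integer part (floor) of $x$. Let $\Phi=(1+\sqrt5)/2$ and $\alpha=2-\Phi$. The characteristic word $c_\alpha=(c_\alpha(n))_{n\ge0}$ is the infinite word over $\{0,1\}$ with $c_\alpha(n)=[(n+2)\alpha]-[(n+1)\alpha]$ (the infinite Fibonacci word). The Fibonacci language $\mathcal{L}_{\rm F}$ is the set of all nonempty finite words occurring as factors of $c_\alpha$. A homomorphism ${\rm S}:\mathcal{L}_{\rm F}\to\mathbb{N}$ is a map with ${\rm S}(w_1\cdots w_n)={\rm S}(w_1)+\cdots+{\rm S}(w_n)$, determined by ${\rm S}(0),{\rm S}(1)\in\mathbb{N}$. *)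

theory Defs
  imports Complex_Main
begin

definition phi :: real where "phi = (1 + sqrt 5) / 2"
definition fib_alpha :: real where "fib_alpha = 2 - phi"

text \<open>Characteristic (infinite Fibonacci) word, indexed from 0; values in {0,1}.\<close>
definition cword :: "nat \<Rightarrow> nat" where
  "cword n = nat (\<lfloor>(real n + 2) * fib_alpha\<rfloor> - \<lfloor>(real n + 1) * fib_alpha\<rfloor>)"

definition fib_lang :: "nat list set" where
  "fib_lang = {w. w \<noteq> [] \<and> (\<exists>i. \<forall>k<length w. w ! k = cword (i + k))}"

definition hom_S :: "nat \<Rightarrow> nat \<Rightarrow> nat list \<Rightarrow> nat" where
  "hom_S a b w = (\<Sum>x\<leftarrow>w. if x = 0 then a else b)"

end

theory Submission
  imports Defs "HOL-Analysis.Kronecker_Approximation_Theorem" "HOL-Computational_Algebra.Primes"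
begin

text \<open>
  The factor of length n starting at position i of the Fibonacci word contains
  \<open>\<lfloor>(i+n+1)\<alpha>\<rfloor> - \<lfloor>(i+1)\<alpha>\<rfloor>\<close> ones, which is \<open>\<lfloor>n\<alpha>\<rfloor>\<close> or \<open>\<lfloor>n\<alpha>\<rfloor> + 1\<close>; since \<open>\<alpha>\<close> is
  irrational, Kronecker's theorem shows that both values occur for every n. Hence the image
  of S consists exactly of the numbers \<open>a(n - k) + bk\<close> with \<open>k \<in> {\<lfloor>n\<alpha>\<rfloor>, \<lfloor>n\<alpha>\<rfloor> + 1}\<close>.
  For the four exceptional pairs these numbers advance with n in steps small enough to be
  filled by the two choices of k, so every positive integer occurs. For \<open>(2, 2)\<close> all
  values are even. In all other cases the values grow like \<open>(a(1 - \<alpha>) + b\<alpha>) n\<close> with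
  slope greater than 2, while each n contributes only two values, so the image has upper
  density below 1 and misses infinitely many integers.
\<close>

lemma sqrt_prime_irrational:
  assumes "prime (p::nat)"
  shows "sqrt (real p) \<notin> \<rat>"
proof
  assume "sqrt (real p) \<in> \<rat>"
  then obtain m n :: nat
    where n: "n \<noteq> 0" and sq: "\<bar>sqrt (real p)\<bar> = m / n" and "coprime m n"
    by (rule Rats_abs_nat_div_natE)
  have "real m = sqrt p * n" using n sq by (simp add: field_simps)
  then have "real (m^2) = real (p * n^2)" by (simp add: power_mult_distrib)
  then have eq: "m^2 = p * n^2" by linarith
  then have "p dvd m" using assms by (metis dvd_triv_left prime_dvd_power)
  then obtain k where "m = p * k" ..
  with eq have "p * n^2 = p * (p * k^2)" by (auto simp: power2_eq_square algebra_simps)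
  then have "n^2 = p * k^2" using assms prime_gt_0_nat by simp
  then have "p dvd n" using assms by (metis dvd_triv_left prime_dvd_power)
  with \<open>p dvd m\<close> \<open>coprime m n\<close> assms show False
    by (metis coprime_common_divisor_nat not_prime_1)
qed

lemma floor_add_irrational_multiple:
  fixes \<theta> y :: real and e :: int
  assumes "\<theta> \<notin> \<rat>" "y \<notin> \<int>" "e \<in> {0, 1}"
  obtains k :: nat where "k > 0" "\<lfloor>real k * \<theta> + y\<rfloor> = \<lfloor>real k * \<theta>\<rfloor> + \<lfloor>y\<rfloor> + e"
proof -
  have y: "0 < frac y" "frac y < 1"
    using assms(2) frac_ge_0 frac_lt_1 frac_eq_0_iff by (metis less_le)+
  define \<epsilon> where "\<epsilon> = (if e = 0 then 1 - frac y else frac y)"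
  have "0 \<le> real_of_int e" "real_of_int e \<le> 1" "\<epsilon> > 0"
    using assms(3) y by (auto simp: \<epsilon>_def)
  then obtain k where k: "k > 0" "\<bar>frac (real k * \<theta>) - real_of_int e\<bar> < \<epsilon>"
    using Kronecker_approx_1_explicit[OF assms(1)] by blast
  have "frac (real k * \<theta>) + frac y < 1 \<longleftrightarrow> e = 0"
    using k(2) assms(3) frac_lt_1[of "real k * \<theta>"] frac_ge_0[of "real k * \<theta>"]
    by (auto simp: \<epsilon>_def)
  with k(1) that show thesis using assms(3) by (auto simp: floor_add)
qed

lemma nat_cover_by_increasing:
  fixes p :: "nat \<Rightarrow> nat"
  assumes mono: "\<And>n. n \<ge> 1 \<Longrightarrow> p n < p (Suc n)"
    and gaps: "\<And>n. n \<ge> 1 \<Longrightarrow> p (Suc n) \<le> p n + d + 1"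
    and "p 1 \<le> N"
  obtains n where "n \<ge> 1" "p n \<le> N" "N \<le> p n + d"
proof -
  from \<open>p 1 \<le> N\<close> have "\<exists>n\<ge>1. p n \<le> N \<and> N \<le> p n + d"
  proof (induction N rule: dec_induct)
    case base
    then show ?case by auto
  next
    case (step N)
    then obtain n where n: "n \<ge> 1" "p n \<le> N" "N \<le> p n + d" by blast
    show ?case
    proof (cases "Suc N \<le> p n + d")
      case True
      with n show ?thesis by auto
    next
      case False
      with n mono[OF n(1)] gaps[OF n(1)] show ?thesis
        by (intro exI[of _ "Suc n"]) auto
    qed
  qed
  with that show thesis by blast
qed

lemma infinite_diff_of_sparse:
  fixes V :: "nat set" and h :: "nat \<Rightarrow> nat \<Rightarrow> nat" and c D :: real
  assumes "c > 2" and "D \<ge> 0"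
    and sparse: "\<And>v. v \<in> V \<Longrightarrow> \<exists>n e. e \<le> 1 \<and> v = h n e \<and> c * real n - D \<le> real v"
  shows "infinite ({N. N \<ge> 1} - V)"
proof
  assume "finite ({N. N \<ge> 1} - V)"
  then obtain N0 where N0: "{N. N \<ge> 1} - V \<subseteq> {..<N0}" using finite_nat_bounded by blast
  have "1 - 2 / c > 0" using assms(1) by simp
  then obtain X :: nat where X: "real N0 + 4 + 2 * D / c < real X * (1 - 2 / c)"
    using reals_Archimedean2[of "(real N0 + 4 + 2 * D / c) / (1 - 2 / c)"]
    by (auto simp: field_simps)
  define M where "M = nat \<lceil>(real X + D) / c\<rceil>"
  \<comment> \<open>the \<open>X - N0\<close> numbers in \<open>{N0<..X} \<subseteq> V\<close> come from only \<open>2(M + 1) \<approx> 2X/c\<close> pairs\<close>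
  have "{Suc N0..X} \<subseteq> (\<lambda>(n, e). h n e) ` ({..M} \<times> {..1})"
  proof
    fix N assume N: "N \<in> {Suc N0..X}"
    then have "N \<notin> {N. N \<ge> 1} - V \<Longrightarrow> N \<in> V" by simp
    with N N0 have "N \<in> V" by fastforce
    then obtain n e where ne: "e \<le> 1" "N = h n e" "c * real n - D \<le> real N"
      using sparse by blast
    then have "real n \<le> (real X + D) / c" using N assms(1) by (simp add: field_simps)
    then have "n \<le> M" unfolding M_def by linarith
    with ne show "N \<in> (\<lambda>(n, e). h n e) ` ({..M} \<times> {..1})" by force
  qed
  then have "card {Suc N0..X} \<le> card ((\<lambda>(n, e). h n e) ` ({..M} \<times> {..1}))"
    by (intro card_mono) auto
  also have "\<dots> \<le> card ({..M} \<times> {..1::nat})" by (rule card_image_le) simp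
  finally have "real X - real N0 \<le> 2 * real M + 2" by simp
  moreover have "real M \<le> (real X + D) / c + 1"
    unfolding M_def using assms(1,2) by (simp add: divide_nonneg_nonneg)
  moreover have "2 * ((real X + D) / c) = real X * (2 / c) + 2 * D / c"
    using assms(1) by (simp add: field_simps)
  moreover have "real X * (1 - 2 / c) = real X - real X * (2 / c)"
    by (simp add: algebra_simps)
  ultimately show False using X by linarith
qed

lemma hom_S_binary:
  assumes "set w \<subseteq> {0, 1}"
  shows "hom_S a b w = a * (length w - sum_list w) + b * sum_list w"
  using assms
proof (induction w)
  case Nil
  then show ?case by (simp add: hom_S_def)
next
  case (Cons x w)
  have "sum_list w \<le> length w"
    using Cons.prems by (induction w) auto
  with Cons show ?case by (auto simp: hom_S_def Suc_diff_le)
qed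

lemma fib_alpha_irrational: "fib_alpha \<notin> \<rat>"
proof
  assume "fib_alpha \<in> \<rat>"
  then have "3 - 2 * fib_alpha \<in> \<rat>" by simp
  moreover have "3 - 2 * fib_alpha = sqrt (real (5::nat))"
    by (simp add: fib_alpha_def phi_def algebra_simps)
  moreover have "prime (5::nat)" by (simp add: prime_nat_iff' atLeastLessThan_nat_numeral)
  ultimately show False using sqrt_prime_irrational by metis
qed

lemma fib_alpha_bounds: "3819 / 10000 < fib_alpha" "fib_alpha < 382 / 1000"
proof -
  have "2.236 < sqrt (5::real)" by (rule real_less_rsqrt) (simp add: power2_eq_square)
  moreover have "sqrt (5::real) < sqrt (2.2361^2)"
    by (rule real_sqrt_less_mono) (simp add: power2_eq_square)
  ultimately show "3819 / 10000 < fib_alpha" "fib_alpha < 382 / 1000"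
    by (simp_all add: fib_alpha_def phi_def)
qed

definition fib_floor :: "nat \<Rightarrow> nat" where
  "fib_floor n = nat \<lfloor>real n * fib_alpha\<rfloor>"

lemma of_nat_fib_floor: "int (fib_floor n) = \<lfloor>real n * fib_alpha\<rfloor>"
  using fib_alpha_bounds by (simp add: fib_floor_def)

lemma fib_floor_bounds:
  "real n * fib_alpha - 1 < real (fib_floor n)" "real (fib_floor n) \<le> real n * fib_alpha"
  using of_nat_fib_floor[of n] by linarith+

lemma fib_floor_1: "fib_floor 1 = 0" and fib_floor_2: "fib_floor 2 = 0"
  using fib_alpha_bounds by (simp_all add: fib_floor_def)

lemma fib_floor_add:
  "fib_floor (m + n) = fib_floor m + fib_floor n \<or> fib_floor (m + n) = Suc (fib_floor m + fib_floor n)"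
proof -
  have "real (m + n) * fib_alpha = real m * fib_alpha + real n * fib_alpha"
    by (simp add: algebra_simps)
  then have "int (fib_floor (m + n)) = int (fib_floor m) + int (fib_floor n) \<or>
             int (fib_floor (m + n)) = int (fib_floor m) + int (fib_floor n) + 1"
    unfolding of_nat_fib_floor by (simp add: floor_add)
  then show ?thesis by linarith
qed

lemma fib_floor_Suc: "fib_floor (Suc n) = fib_floor n \<or> fib_floor (Suc n) = Suc (fib_floor n)"
  using fib_floor_add[of n 1] fib_floor_1 by simp

lemma fib_floor_Suc_Suc_le: "fib_floor (Suc (Suc n)) \<le> Suc (fib_floor n)"
  using fib_floor_add[of n 2] by (auto simp: fib_floor_2)

lemma fib_floor_less: assumes "n \<ge> 1" shows "fib_floor n < n"
proof -
  have "real (fib_floor n) \<le> real n * fib_alpha" by (rule fib_floor_bounds)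
  also have "\<dots> < real n" using assms fib_alpha_bounds by simp
  finally show ?thesis by simp
qed

lemma fib_floor_mono: assumes "m \<le> n" shows "fib_floor m \<le> fib_floor n"
  using fib_floor_add[of m "n - m"] assms by auto

lemma cword_eq: "cword n = fib_floor (Suc (Suc n)) - fib_floor (Suc n)"
proof -
  have "real (Suc (Suc n)) = real n + 2" "real (Suc n) = real n + 1" by simp_all
  then show ?thesis
    unfolding cword_def using of_nat_fib_floor[of "Suc n"] of_nat_fib_floor[of "Suc (Suc n)"]
    by (metis nat_minus_as_int)
qed

definition fib_factor :: "nat \<Rightarrow> nat \<Rightarrow> nat list" where
  "fib_factor i n = map (\<lambda>k. cword (i + k)) [0..<n]"

lemma fib_lang_eq: "fib_lang = {fib_factor i n | i n. n \<ge> 1}"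
proof (intro set_eqI iffI)
  fix w assume "w \<in> fib_lang"
  then obtain i where "w \<noteq> []" "\<forall>k<length w. w ! k = cword (i + k)"
    unfolding fib_lang_def by blast
  then have "w = fib_factor i (length w)" "length w \<ge> 1"
    by (auto intro: nth_equalityI simp: fib_factor_def Suc_le_eq)
  then show "w \<in> {fib_factor i n | i n. n \<ge> 1}" by blast
qed (auto simp: fib_lang_def fib_factor_def)

lemma length_fib_factor [simp]: "length (fib_factor i n) = n"
  by (simp add: fib_factor_def)

lemma fib_factor_binary: "set (fib_factor i n) \<subseteq> {0, 1}"
proof -
  have "cword m = 0 \<or> cword m = 1" for m
    using fib_floor_Suc[of "Suc m"] by (auto simp: cword_eq)
  then show ?thesis unfolding fib_factor_def by (auto simp: image_subset_iff)
qed

lemma sum_list_fib_factor: "sum_list (fib_factor i n) = fib_floor (i + n + 1) - fib_floor (i + 1)"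
proof (induction n)
  case 0
  then show ?case by (simp add: fib_factor_def)
next
  case (Suc n)
  have "fib_floor (i + 1) \<le> fib_floor (i + n + 1)" "fib_floor (i + n + 1) \<le> fib_floor (i + n + 2)"
    by (simp_all add: fib_floor_mono)
  with Suc show ?case by (simp add: fib_factor_def cword_eq)
qed

lemma sum_list_fib_factor_cases:
  "sum_list (fib_factor i n) = fib_floor n \<or> sum_list (fib_factor i n) = Suc (fib_floor n)"
  using fib_floor_add[of "i + 1" n] by (auto simp: sum_list_fib_factor add.commute add.left_commute)

lemma sum_list_fib_factor_realized:
  assumes "n \<ge> 1" and "k = fib_floor n \<or> k = Suc (fib_floor n)"
  obtains i where "sum_list (fib_factor i n) = k"
proof -
  have "real n * fib_alpha \<notin> \<int>"
  proof
    assume "real n * fib_alpha \<in> \<int>"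
    then have "real n * fib_alpha / real n \<in> \<rat>"
      using Ints_subset_Rats by (intro Rats_divide) auto
    then show False using assms(1) fib_alpha_irrational by simp
  qed
  moreover have "int k - int (fib_floor n) \<in> {0, 1}" using assms(2) by auto
  ultimately obtain j :: nat where j: "j > 0"
    "\<lfloor>real j * fib_alpha + real n * fib_alpha\<rfloor> =
       \<lfloor>real j * fib_alpha\<rfloor> + \<lfloor>real n * fib_alpha\<rfloor> + (int k - int (fib_floor n))"
    using floor_add_irrational_multiple[OF fib_alpha_irrational] by metis
  have "real (j + n) * fib_alpha = real j * fib_alpha + real n * fib_alpha"
    by (simp add: algebra_simps)
  then have "int (fib_floor (j + n)) = int (fib_floor j) + int k"
    using j(2) by (simp add: of_nat_fib_floor)
  then have "sum_list (fib_factor (j - 1) n) = k"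
    using j(1) by (simp add: sum_list_fib_factor)
  then show thesis by (rule that)
qed

definition fib_values :: "nat \<Rightarrow> nat \<Rightarrow> nat set" where
  "fib_values a b =
     {a * (n - k) + b * k | n k. n \<ge> 1 \<and> (k = fib_floor n \<or> k = Suc (fib_floor n))}"

lemma hom_S_image: "hom_S a b ` fib_lang = fib_values a b"
proof (intro set_eqI iffI)
  fix v assume "v \<in> hom_S a b ` fib_lang"
  then obtain i n where "n \<ge> 1" "v = hom_S a b (fib_factor i n)"
    by (auto simp: fib_lang_eq)
  then have "v = a * (n - sum_list (fib_factor i n)) + b * sum_list (fib_factor i n)"
    by (simp add: hom_S_binary[OF fib_factor_binary])
  with \<open>n \<ge> 1\<close> show "v \<in> fib_values a b"
    using sum_list_fib_factor_cases[of i n] unfolding fib_values_def by blast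
next
  fix v assume "v \<in> fib_values a b"
  then obtain n k where n: "n \<ge> 1" "k = fib_floor n \<or> k = Suc (fib_floor n)"
    and v: "v = a * (n - k) + b * k"
    by (auto simp: fib_values_def)
  obtain i where "sum_list (fib_factor i n) = k"
    using sum_list_fib_factor_realized[OF n] .
  then have "v = hom_S a b (fib_factor i n)"
    by (simp add: v hom_S_binary[OF fib_factor_binary])
  moreover have "fib_factor i n \<in> fib_lang" using n(1) by (auto simp: fib_lang_eq)
  ultimately show "v \<in> hom_S a b ` fib_lang" by blast
qed

lemma fib_valuesI:
  assumes "n \<ge> 1" "k = fib_floor n \<or> k = Suc (fib_floor n)" "v = a * (n - k) + b * k"
  shows "v \<in> fib_values a b"
  using assms unfolding fib_values_def by blast

lemma fib_values_1_1: "N \<ge> 1 \<Longrightarrow> N \<in> fib_values 1 1"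
  using fib_floor_less[of N] by (intro fib_valuesI[of N "fib_floor N"]) auto

lemma fib_values_1_2:
  assumes "N \<ge> 1" shows "N \<in> fib_values 1 2"
proof -
  have "n + fib_floor n < Suc n + fib_floor (Suc n)"
    and "Suc n + fib_floor (Suc n) \<le> n + fib_floor n + 1 + 1" for n
    using fib_floor_Suc[of n] by auto
  moreover have "1 + fib_floor 1 \<le> N" using assms fib_floor_1 by simp
  ultimately obtain n where n: "n \<ge> 1" "n + fib_floor n \<le> N" "N \<le> n + fib_floor n + 1"
    using nat_cover_by_increasing[of "\<lambda>n. n + fib_floor n" 1 N] by blast
  then consider "N = n + fib_floor n" | "N = n + Suc (fib_floor n)" by linarith
  then show ?thesis
    by cases (use n(1) fib_floor_less[OF n(1)] in \<open>auto intro: fib_valuesI[of n]\<close>)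
qed

lemma fib_values_2_1:
  assumes "N \<ge> 1" shows "N \<in> fib_values 2 1"
proof -
  have "2 * n - Suc (fib_floor n) < 2 * Suc n - Suc (fib_floor (Suc n))"
    and "2 * Suc n - Suc (fib_floor (Suc n)) \<le> 2 * n - Suc (fib_floor n) + 1 + 1"
    if "n \<ge> 1" for n
    using fib_floor_Suc[of n] fib_floor_less[OF that] by auto
  moreover have "2 * 1 - Suc (fib_floor 1) \<le> N" using assms fib_floor_1 by simp
  ultimately obtain n where n: "n \<ge> 1" "2 * n - Suc (fib_floor n) \<le> N"
    "N \<le> 2 * n - Suc (fib_floor n) + 1"
    using nat_cover_by_increasing[of "\<lambda>n. 2 * n - Suc (fib_floor n)" 1 N] by blast
  then consider "N = 2 * (n - Suc (fib_floor n)) + Suc (fib_floor n)"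
    | "N = 2 * (n - fib_floor n) + fib_floor n"
    using fib_floor_less[OF n(1)] by linarith
  then show ?thesis
    by cases (use n(1) in \<open>auto intro: fib_valuesI[of n]\<close>)
qed

lemma fib_values_1_3:
  assumes "N \<ge> 1" shows "N \<in> fib_values 1 3"
proof -
  have "n + 2 * fib_floor n < Suc n + 2 * fib_floor (Suc n)"
    and "Suc n + 2 * fib_floor (Suc n) \<le> n + 2 * fib_floor n + 2 + 1" for n
    using fib_floor_Suc[of n] by auto
  moreover have "1 + 2 * fib_floor 1 \<le> N" using assms fib_floor_1 by simp
  ultimately obtain n where n: "n \<ge> 1" "n + 2 * fib_floor n \<le> N" "N \<le> n + 2 * fib_floor n + 2"
    using nat_cover_by_increasing[of "\<lambda>n. n + 2 * fib_floor n" 2 N] by blast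
  consider "N = n + 2 * fib_floor n" | "N = n + 2 * Suc (fib_floor n)"
    | "N = Suc n + 2 * fib_floor n" using n by fastforce
  then show ?thesis
  proof cases
    case 1
    with n(1) fib_floor_less[OF n(1)] show ?thesis by (intro fib_valuesI[of n "fib_floor n"]) auto
  next
    case 2
    with n(1) fib_floor_less[OF n(1)] show ?thesis
      by (intro fib_valuesI[of n "Suc (fib_floor n)"]) auto
  next
    case 3
    show ?thesis
    proof (cases "fib_floor (Suc n) = fib_floor n")
      case True
      with 3 fib_floor_less[of "Suc n"] show ?thesis
        by (intro fib_valuesI[of "Suc n" "fib_floor (Suc n)"]) auto
    next
      case False
      then have jump: "fib_floor (Suc n) = Suc (fib_floor n)" using fib_floor_Suc[of n] by simp
      then have "n \<noteq> 1" using fib_floor_1 fib_floor_2 by (auto simp: numeral_2_eq_2)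
      then obtain m where m: "n = Suc m" "m \<ge> 1" using n(1) by (cases n) auto
      \<comment> \<open>\<open>fib_floor\<close> never jumps twice in a row, so the step from m to n is flat\<close>
      have "fib_floor m = fib_floor n"
        using fib_floor_Suc[of m] fib_floor_Suc_Suc_le[of m] jump m(1) by auto
      with 3 m fib_floor_less[OF m(2)] show ?thesis
        by (intro fib_valuesI[of m "Suc (fib_floor m)"]) auto
    qed
  qed
qed

lemma fib_values_even: "even a \<Longrightarrow> even b \<Longrightarrow> v \<in> fib_values a b \<Longrightarrow> even v"
  by (auto simp: fib_values_def)

lemma fib_values_lower_bound:
  assumes "k = fib_floor n \<or> k = Suc (fib_floor n)" "k \<le> n"
  shows "(real a * (1 - fib_alpha) + real b * fib_alpha) * real n - real (a + b)
           \<le> real (a * (n - k) + b * k)"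
proof -
  have k: "real n * fib_alpha - 1 \<le> real k" "real k \<le> real n * fib_alpha + 1"
    using assms(1) fib_floor_bounds[of n] by auto
  have "real (a * (n - k) + b * k) = real a * (real n - real k) + real b * real k"
    using assms(2) by (simp add: of_nat_diff)
  also have "\<dots> \<ge> real a * (real n - (real n * fib_alpha + 1)) + real b * (real n * fib_alpha - 1)"
    using k by (intro add_mono mult_left_mono) auto
  finally show ?thesis by (simp add: algebra_simps)
qed

lemma infinite_diff_fib_values:
  assumes "real a * (1 - fib_alpha) + real b * fib_alpha > 2"
  shows "infinite ({N. N \<ge> 1} - fib_values a b)"
proof (rule infinite_diff_of_sparse[OF assms, of "real (a + b)"])
  fix v assume "v \<in> fib_values a b"
  then obtain n k where n: "n \<ge> 1" "k = fib_floor n \<or> k = Suc (fib_floor n)"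
    and v: "v = a * (n - k) + b * k"
    by (auto simp: fib_values_def)
  have "k \<le> n" using n fib_floor_less[OF n(1)] by auto
  with n v show "\<exists>n e. e \<le> 1 \<and> v = a * (n - (fib_floor n + e)) + b * (fib_floor n + e) \<and>
      (real a * (1 - fib_alpha) + real b * fib_alpha) * real n - real (a + b) \<le> real v"
    using fib_values_lower_bound[of k n a b] by (intro exI[of _ n] exI[of _ "k - fib_floor n"]) auto
qed simp

lemma growth_rate_gt_2:
  assumes "a \<ge> 1" "b \<ge> 1" "(a, b) \<notin> {(1,1),(1,2),(1,3),(2,1),(2,2)}"
  shows "real a * (1 - fib_alpha) + real b * fib_alpha > 2"
proof -
  note \<alpha> = fib_alpha_bounds
  have lower: "real a * (1 - fib_alpha) + real b * fib_alpha \<ge> a0 * (1 - fib_alpha) + b0 * fib_alpha"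
    if "a0 \<le> real a" "b0 \<le> real b" for a0 b0
    using that \<alpha> by (intro add_mono mult_right_mono) auto
  consider "a \<ge> 3" | "a = 2" "b \<ge> 3" | "a = 1" "b \<ge> 4" using assms by fastforce
  then show ?thesis
  proof cases
    case 1
    then have "real a * (1 - fib_alpha) + real b * fib_alpha \<ge> 3 * (1 - fib_alpha) + 1 * fib_alpha"
      using assms(2) by (intro lower) auto
    with \<alpha> show ?thesis by argo
  next
    case 2
    then have "real a * (1 - fib_alpha) + real b * fib_alpha \<ge> 2 * (1 - fib_alpha) + 3 * fib_alpha"
      by (intro lower) auto
    with \<alpha> show ?thesis by argo
  next
    case 3
    then have "real a * (1 - fib_alpha) + real b * fib_alpha \<ge> 1 * (1 - fib_alpha) + 4 * fib_alpha"
      by (intro lower) auto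
    with \<alpha> show ?thesis by argo
  qed
qed

theorem theorem6:
  fixes a b :: nat
  assumes "a \<ge> 1" and "b \<ge> 1"
  shows "((a, b) \<in> {(1,1),(1,2),(1,3),(2,1)} \<longrightarrow>
            {n::nat. n \<ge> 1} - hom_S a b ` fib_lang = {}) \<and>
         ((a, b) \<notin> {(1,1),(1,2),(1,3),(2,1)} \<longrightarrow>
            infinite ({n::nat. n \<ge> 1} - hom_S a b ` fib_lang))"
proof (intro conjI impI)
  assume "(a, b) \<in> {(1,1),(1,2),(1,3),(2,1)}"
  then have "{n. n \<ge> 1} \<subseteq> fib_values a b"
    using fib_values_1_1 fib_values_1_2 fib_values_1_3 fib_values_2_1 by auto
  then show "{n::nat. n \<ge> 1} - hom_S a b ` fib_lang = {}"
    by (simp add: hom_S_image)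
next
  assume non_exceptional: "(a, b) \<notin> {(1,1),(1,2),(1,3),(2,1)}"
  show "infinite ({n::nat. n \<ge> 1} - hom_S a b ` fib_lang)"
  proof (cases "(a, b) = (2, 2)")
    case True
    have "range (\<lambda>m. Suc (2 * m)) \<subseteq> {n. n \<ge> 1} - fib_values 2 2"
      using fib_values_even[of 2 2] by fastforce
    moreover have "infinite (range (\<lambda>m::nat. Suc (2 * m)))"
      by (rule range_inj_infinite) (simp add: inj_def)
    ultimately show ?thesis
      using True by (auto simp: hom_S_image dest: infinite_super)
  next
    case False
    with assms non_exceptional have "(a, b) \<notin> {(1,1),(1,2),(1,3),(2,1),(2,2)}" by simp
    then show ?thesis
      using infinite_diff_fib_values[OF growth_rate_gt_2[OF assms]] by (simp add: hom_S_image)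
  qed
qed

end
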